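(* Let $\boldsymbol\alpha=(\alpha_i(\theta_b))_{1\le i\le k,1\le b\le B}$ be a fixed static allocation in the setting described in the context. Then for every $b\in\{1,\dots,B\}$ and every solution $i\neq i^b$, $$\liminf_{n\to\infty}-\frac1n\log \mathrm{P}\left(m^n_{i,b}=1\right)\;\ge\; G_i(\theta_b),$$ where $m^n_{i,b}=\mathbf 1\{i=i^b_n\}$.
   Context: There are $k\ge2$ solutions and $B$ parameter values $\theta_1,\dots,\theta_B$ with probabilities $p_1,\dots,p_B\ge 0$, $\sum_b p_b=1$. For each $i,b$, $y_i(\theta_b)\in\mathbb R$ is the (unknown) mean simulation output of solution $i$ at $\theta_b$. For each $b$ the conditional optimum $i^b=\arg\min_{1\le i\le k}y_i(\theta_b)$ is assumed unique. Simulation outputs $Y_{i1}(\theta_b),Y_{i2}(\theta_b),\dots$ at pair $(i,\theta_b)$ are i.i.d. $N(y_i(\theta_b),\lambda_i^2(\theta_b))$ with known $\lambda_i(\theta_b)>0$, independent across pairs. A static allocation is a vector $\boldsymbol\alpha$ with $\alpha_i(\theta_b)\ge0$ and $\sum_{i,b}\alpha_i(\theta_b)=1$; given $\boldsymbol\alpha$, after a total budget $n$ the pair $(i,\theta_b)$ has received $N_i^n(\theta_b)$ replications, where $N_i^n(\theta_b)/n\to\alpha_i(\theta_b)$ and $N_i^n(\theta_b)\to\infty$ as $n\to\infty$ (even if $\alpha_i(\theta_b)=0$). Let $\mu_{i,n}(\theta_b)$ be the sample mean of the $N_i^n(\theta_b)$ outputs at $(i,\theta_b)$ and $i^b_n=\arg\min_i\mu_{i,n}(\theta_b)$.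 For $i\ne i^b$ define $$G_i(\theta_b)=\frac{(y_i(\theta_b)-y_{i^b}(\theta_b))^2}{2\left(\lambda_i^2(\theta_b)/\alpha_i(\theta_b)+\lambda_{i^b}^2(\theta_b)/\alpha_{i^b}(\theta_b)\right)},$$ with $G_i(\theta_b)=0$ if $\alpha_i(\theta_b)=0$ or $\alpha_{i^b}(\theta_b)=0$. *)

theory Defs
  imports "HOL-Probability.Probability"
begin

text \<open>Solutions are indexed by i < k, parameter values theta_b by b < B.
  y i b = y_i(theta_b), lam i b = lambda_i(theta_b), alpha i b = alpha_i(theta_b),
  ib b = i^b (the unique conditional optimum).\<close>

definition G_rate :: "(nat \<Rightarrow> nat \<Rightarrow> real) \<Rightarrow> (nat \<Rightarrow> nat \<Rightarrow> real) \<Rightarrow> (nat \<Rightarrow> nat \<Rightarrow> real)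
    \<Rightarrow> (nat \<Rightarrow> nat) \<Rightarrow> nat \<Rightarrow> nat \<Rightarrow> real" where
  "G_rate y lam alpha ib i b =
     (if alpha i b = 0 \<or> alpha (ib b) b = 0 then 0
      else (y i b - y (ib b) b)^2 /
           (2 * ((lam i b)^2 / alpha i b + (lam (ib b) b)^2 / alpha (ib b) b)))"

definition sample_mean :: "(nat \<Rightarrow> nat \<Rightarrow> nat \<Rightarrow> 'a \<Rightarrow> real) \<Rightarrow> (nat \<Rightarrow> nat \<Rightarrow> nat \<Rightarrow> nat)
    \<Rightarrow> nat \<Rightarrow> nat \<Rightarrow> nat \<Rightarrow> 'a \<Rightarrow> real" where
  "sample_mean Y N n i b \<omega> = (\<Sum>j<N n i b. Y i b j \<omega>) / real (N n i b)"

end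

theory Submission
  imports Defs
begin

text \<open>Solution \<open>i\<close> can have the smallest sample mean at \<open>\<theta>\<^sub>b\<close> only if its sample mean is at
  most that of the optimum \<open>ib b\<close>. The difference of these two sample means is normal with mean
  \<open>y i b - y (ib b) b > 0\<close> and variance \<open>lam i b\<^sup>2 / N n i b + lam (ib b) b\<^sup>2 / N n (ib b) b\<close>, so
  the Gaussian tail bound \<open>P(Z \<le> 0) \<le> exp (-\<mu>\<^sup>2 / (2\<sigma>\<^sup>2))\<close> bounds its probability by
  \<open>exp (- n G\<^sub>n)\<close>, where \<open>G\<^sub>n\<close> is the rate \<open>G_rate\<close> evaluated at the empirical allocation
  \<open>N n i b / n\<close>. If both allocations are positive, \<open>G\<^sub>n\<close> converges to the rate at \<open>alpha\<close>;
  otherwise that rate is \<open>0\<close> and there is nothing to bound.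
  Since \<open>ln 0 = 0\<close> in HOL, the event must also be shown to have positive probability:
  independent normals charge every box, and on a box where the outputs of \<open>i\<close> are \<open>\<le> 0\<close> and
  all other outputs \<open>\<ge> 0\<close>, solution \<open>i\<close> wins.\<close>

lemma (in prob_space) prob_normal_le_exp:
  assumes X: "distributed M lborel X (normal_density \<mu> \<sigma>)" and "0 < \<sigma>" and "a \<le> \<mu>"
  shows "prob {\<omega> \<in> space M. X \<omega> \<le> a} \<le> exp (- (\<mu> - a)\<^sup>2 / (2 * \<sigma>\<^sup>2))"
proof -
  let ?c = "exp (- (\<mu> - a)\<^sup>2 / (2 * \<sigma>\<^sup>2))"
  have density_le: "normal_density \<mu> \<sigma> x \<le> ?c * normal_density a \<sigma> x" if "x \<le> a" for x
  proof -
    have "(\<mu> - a)\<^sup>2 + (x - a)\<^sup>2 \<le> (x - \<mu>)\<^sup>2"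
      using mult_nonneg_nonneg[of "a - x" "\<mu> - a"] that \<open>a \<le> \<mu>\<close>
      by (simp add: power2_eq_square algebra_simps)
    then have "- (x - \<mu>)\<^sup>2 / (2 * \<sigma>\<^sup>2) \<le> - (\<mu> - a)\<^sup>2 / (2 * \<sigma>\<^sup>2) + - (x - a)\<^sup>2 / (2 * \<sigma>\<^sup>2)"
      using \<open>0 < \<sigma>\<close> by (simp add: field_simps)
    then show ?thesis
      unfolding normal_density_def by (simp add: exp_add[symmetric] divide_right_mono)
  qed
  have "emeasure M {\<omega> \<in> space M. X \<omega> \<le> a}
      = (\<integral>\<^sup>+x. ennreal (normal_density \<mu> \<sigma> x) * indicator {..a} x \<partial>lborel)"
    using distributed_emeasure[OF X, of "{..a}"] by (simp add: vimage_def Int_def conj_commute)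
  also have "\<dots> \<le> (\<integral>\<^sup>+x. ennreal ?c * ennreal (normal_density a \<sigma> x) \<partial>lborel)"
  proof (intro nn_integral_mono)
    fix x
    show "ennreal (normal_density \<mu> \<sigma> x) * indicator {..a} x \<le> ennreal ?c * ennreal (normal_density a \<sigma> x)"
      using density_le[of x] by (cases "x \<le> a") (simp_all add: ennreal_mult'[symmetric])
  qed
  also have "\<dots> = ennreal ?c"
    using \<open>0 < \<sigma>\<close> by (simp add: nn_integral_cmult nn_integral_eq_integral)
  finally show ?thesis
    by (simp add: emeasure_eq_measure)
qed

lemma (in prob_space) prob_normal_interval_pos:
  assumes X: "distributed M lborel X (normal_density \<mu> \<sigma>)" and "0 < \<sigma>" and "l < u"
  shows "0 < prob {\<omega> \<in> space M. X \<omega> \<in> {l..u}}"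
proof -
  have "{x \<in> space lborel. ennreal (normal_density \<mu> \<sigma> x) * indicator {l..u} x \<noteq> 0} = {l..u}"
    using normal_density_pos[OF \<open>0 < \<sigma>\<close>, of \<mu>] by (auto split: split_indicator simp: less_le)
  then have "(\<integral>\<^sup>+x. ennreal (normal_density \<mu> \<sigma> x) * indicator {l..u} x \<partial>lborel) \<noteq> 0"
    using \<open>l < u\<close> by (subst nn_integral_0_iff) auto
  moreover have "emeasure M {\<omega> \<in> space M. X \<omega> \<in> {l..u}}
      = (\<integral>\<^sup>+x. ennreal (normal_density \<mu> \<sigma> x) * indicator {l..u} x \<partial>lborel)"
    using distributed_emeasure[OF X, of "{l..u}"] by (simp add: vimage_def Int_def conj_commute)
  ultimately show ?thesis
    by (simp add: emeasure_eq_measure zero_less_measure_iff) (metis ennreal_0)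
qed

lemma (in prob_space) prob_indep_vars_all_in_pos:
  assumes indep: "indep_vars M' X J" and "finite J"
    and A: "\<And>x. x \<in> J \<Longrightarrow> A x \<in> sets (M' x)"
    and pos: "\<And>x. x \<in> J \<Longrightarrow> 0 < prob {\<omega> \<in> space M. X x \<omega> \<in> A x}"
  shows "0 < prob {\<omega> \<in> space M. \<forall>x\<in>J. X x \<omega> \<in> A x}"
proof (cases "J = {}")
  case True
  then show ?thesis by (simp add: prob_space)
next
  case False
  have "{\<omega> \<in> space M. \<forall>x\<in>J. X x \<omega> \<in> A x} = (\<Inter>x\<in>J. X x -` A x \<inter> space M)"
    using False by auto
  then have "prob {\<omega> \<in> space M. \<forall>x\<in>J. X x \<omega> \<in> A x} = (\<Prod>x\<in>J. prob (X x -` A x \<inter> space M))"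
    using indep_varsD_finite[OF indep False \<open>finite J\<close>] A by simp
  also have "\<dots> > 0"
    using pos by (intro prod_pos) (simp add: vimage_def Int_def conj_commute)
  finally show ?thesis .
qed

lemma (in prob_space) distributed_mean_diff_indep_normal:
  fixes I1 I2 :: "'i set"
  assumes indep: "indep_vars (\<lambda>_. borel) X I" and "I1 \<union> I2 \<subseteq> I"
    and "finite I1" "finite I2" "I1 \<noteq> {}" "I2 \<noteq> {}" "I1 \<inter> I2 = {}"
    and "0 < \<sigma>\<^sub>1" "0 < \<sigma>\<^sub>2"
    and X1: "\<And>x. x \<in> I1 \<Longrightarrow> distributed M lborel (X x) (normal_density \<mu>\<^sub>1 \<sigma>\<^sub>1)"
    and X2: "\<And>x. x \<in> I2 \<Longrightarrow> distributed M lborel (X x) (normal_density \<mu>\<^sub>2 \<sigma>\<^sub>2)"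
  shows "distributed M lborel (\<lambda>\<omega>. (\<Sum>x\<in>I1. X x \<omega>) / card I1 - (\<Sum>x\<in>I2. X x \<omega>) / card I2)
           (normal_density (\<mu>\<^sub>1 - \<mu>\<^sub>2) (sqrt (\<sigma>\<^sub>1\<^sup>2 / card I1 + \<sigma>\<^sub>2\<^sup>2 / card I2)))"
proof -
  define c where "c x = (if x \<in> I1 then 1 / card I1 else - 1 / card I2)" for x
  define \<mu> where "\<mu> x = (if x \<in> I1 then \<mu>\<^sub>1 else \<mu>\<^sub>2)" for x
  define \<sigma> where "\<sigma> x = (if x \<in> I1 then \<sigma>\<^sub>1 else \<sigma>\<^sub>2)" for x
  have on_I1: "c x = 1 / card I1" "\<mu> x = \<mu>\<^sub>1" "\<sigma> x = \<sigma>\<^sub>1" if "x \<in> I1" for x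
    using that by (simp_all add: c_def \<mu>_def \<sigma>_def)
  have on_I2: "c x = - 1 / card I2" "\<mu> x = \<mu>\<^sub>2" "\<sigma> x = \<sigma>\<^sub>2" if "x \<in> I2" for x
    using that \<open>I1 \<inter> I2 = {}\<close> by (auto simp: c_def \<mu>_def \<sigma>_def)
  have sum_split: "(\<Sum>x\<in>I1 \<union> I2. h x) = (\<Sum>x\<in>I1. h x) + (\<Sum>x\<in>I2. h x)" for h :: "'i \<Rightarrow> real"
    using \<open>finite I1\<close> \<open>finite I2\<close> \<open>I1 \<inter> I2 = {}\<close> by (rule sum.union_disjoint)
  have card_pos: "0 < card I1" "0 < card I2"
    using \<open>finite I1\<close> \<open>finite I2\<close> \<open>I1 \<noteq> {}\<close> \<open>I2 \<noteq> {}\<close> by (simp_all add: card_gt_0_iff)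
  have c_nz: "c x \<noteq> 0" for x
    using card_pos by (simp add: c_def)
  have "indep_vars (\<lambda>_. borel) (\<lambda>x \<omega>. c x * X x \<omega>) (I1 \<union> I2)"
    using indep_vars_compose2[OF indep_vars_subset[OF indep \<open>I1 \<union> I2 \<subseteq> I\<close>],
        of "\<lambda>x t. c x * t" "\<lambda>_. borel"]
    by simp
  moreover have "distributed M lborel (\<lambda>\<omega>. c x * X x \<omega>) (normal_density (c x * \<mu> x) (\<bar>c x\<bar> * \<sigma> x))"
    if "x \<in> I1 \<union> I2" for x
    using normal_density_affine[of "X x" "\<mu> x" "\<sigma> x" "c x" 0] that X1 X2 c_nz \<open>0 < \<sigma>\<^sub>1\<close> \<open>0 < \<sigma>\<^sub>2\<close>
    by (auto simp: on_I1 on_I2)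
  ultimately have "distributed M lborel (\<lambda>\<omega>. \<Sum>x\<in>I1 \<union> I2. c x * X x \<omega>)
      (normal_density (\<Sum>x\<in>I1 \<union> I2. c x * \<mu> x) (sqrt (\<Sum>x\<in>I1 \<union> I2. (\<bar>c x\<bar> * \<sigma> x)\<^sup>2)))"
    using \<open>finite I1\<close> \<open>finite I2\<close> \<open>I1 \<noteq> {}\<close> \<open>0 < \<sigma>\<^sub>1\<close> \<open>0 < \<sigma>\<^sub>2\<close> c_nz card_pos
    by (intro sum_indep_normal) (auto simp: on_I1 on_I2)
  moreover have "(\<Sum>x\<in>I1 \<union> I2. c x * X x \<omega>) = (\<Sum>x\<in>I1. X x \<omega>) / card I1 - (\<Sum>x\<in>I2. X x \<omega>) / card I2"
    for \<omega>
    by (simp add: sum_split on_I1 on_I2 sum_negf flip: sum_divide_distrib)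
  moreover have "(\<Sum>x\<in>I1 \<union> I2. c x * \<mu> x) = \<mu>\<^sub>1 - \<mu>\<^sub>2"
    using card_pos by (simp add: sum_split on_I1 on_I2)
  moreover have "(\<Sum>x\<in>I1 \<union> I2. (\<bar>c x\<bar> * \<sigma> x)\<^sup>2) = \<sigma>\<^sub>1\<^sup>2 / card I1 + \<sigma>\<^sub>2\<^sup>2 / card I2"
    using card_pos by (simp add: sum_split on_I1 on_I2 power2_eq_square)
  ultimately show ?thesis
    by simp
qed

definition replications :: "(nat \<Rightarrow> nat \<Rightarrow> nat \<Rightarrow> nat) \<Rightarrow> nat \<Rightarrow> nat \<Rightarrow> nat \<Rightarrow> (nat \<times> nat \<times> nat) set" where
  "replications N n i b = (\<lambda>l. (i, b, l)) ` {..<N n i b}"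

lemma card_replications [simp]: "card (replications N n i b) = N n i b"
  by (simp add: replications_def card_image inj_on_def)

lemma sample_mean_eq_replications:
  "sample_mean Y N n i b \<omega> = (\<Sum>x\<in>replications N n i b. (\<lambda>(i, b, l). Y i b l) x \<omega>) / N n i b"
  by (simp add: sample_mean_def replications_def sum.reindex inj_on_def)

lemma sample_mean_argmin_of_signs:
  assumes "\<And>l. l < N n i b \<Longrightarrow> Y i b l \<omega> \<le> 0"
    and "\<And>j l. j < k \<Longrightarrow> j \<noteq> i \<Longrightarrow> l < N n j b \<Longrightarrow> 0 \<le> Y j b l \<omega>"
  shows "\<forall>j<k. sample_mean Y N n i b \<omega> \<le> sample_mean Y N n j b \<omega>"
proof (intro allI impI)
  fix j assume "j < k"
  have "sample_mean Y N n i b \<omega> \<le> 0"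
    unfolding sample_mean_def using assms(1) by (intro divide_nonpos_nonneg sum_nonpos) auto
  moreover have "0 \<le> sample_mean Y N n j b \<omega>" if "j \<noteq> i"
    unfolding sample_mean_def using assms(2) \<open>j < k\<close> that
    by (intro divide_nonneg_nonneg sum_nonneg) auto
  ultimately show "sample_mean Y N n i b \<omega> \<le> sample_mean Y N n j b \<omega>"
    by (cases "j = i") auto
qed

lemma borel_measurable_sample_mean:
  assumes "\<And>l. Y i b l \<in> borel_measurable M"
  shows "sample_mean Y N n i b \<in> borel_measurable M"
  unfolding sample_mean_def using assms by measurable

lemma (in prob_space) prob_sample_mean_argmin_pos:
  assumes indep: "indep_vars (\<lambda>_. borel) (\<lambda>(i, b, l). Y i b l) S"
    and S: "\<And>j. j < k \<Longrightarrow> replications N n j b \<subseteq> S"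
    and Y: "\<And>j l. j < k \<Longrightarrow> distributed M lborel (Y j b l) (normal_density (y j b) (lam j b))"
    and lam: "\<And>j. j < k \<Longrightarrow> 0 < lam j b" and "i < k"
  shows "0 < prob {\<omega> \<in> space M. \<forall>j<k. sample_mean Y N n i b \<omega> \<le> sample_mean Y N n j b \<omega>}"
proof -
  define J where "J = (\<Union>j<k. replications N n j b)"
  define A where "A x = (if fst x = i then {-1..0} else {0..1::real})" for x :: "nat \<times> nat \<times> nat"
  define F where "F = {\<omega> \<in> space M. \<forall>x\<in>J. (\<lambda>(i, b, l). Y i b l) x \<omega> \<in> A x}"
  have "0 < prob F"
    unfolding F_def
  proof (rule prob_indep_vars_all_in_pos)
    show "indep_vars (\<lambda>_. borel) (\<lambda>(i, b, l). Y i b l) J"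
      using S by (auto simp: J_def intro: indep_vars_subset[OF indep])
    fix x assume "x \<in> J"
    then obtain j l where "x = (j, b, l)" "j < k"
      by (auto simp: J_def replications_def)
    then show "0 < prob {\<omega> \<in> space M. (\<lambda>(i, b, l). Y i b l) x \<omega> \<in> A x}"
      using prob_normal_interval_pos[OF Y lam] by (simp add: A_def)
  qed (auto simp: J_def A_def replications_def)
  also have "prob F \<le> prob {\<omega> \<in> space M. \<forall>j<k. sample_mean Y N n i b \<omega> \<le> sample_mean Y N n j b \<omega>}"
  proof (rule finite_measure_mono)
    have [measurable]: "sample_mean Y N n j b \<in> borel_measurable M" if "j < k" for j
      using distributed_measurable[OF Y[OF that]] by (simp add: borel_measurable_sample_mean)
    show "{\<omega> \<in> space M. \<forall>j<k. sample_mean Y N n i b \<omega> \<le> sample_mean Y N n j b \<omega>} \<in> sets M"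
      using \<open>i < k\<close> by measurable
    show "F \<subseteq> {\<omega> \<in> space M. \<forall>j<k. sample_mean Y N n i b \<omega> \<le> sample_mean Y N n j b \<omega>}"
    proof
      fix \<omega> assume "\<omega> \<in> F"
      then have box: "Y j b l \<omega> \<in> A (j, b, l)" if "j < k" "l < N n j b" for j l
        using that by (auto simp: F_def J_def replications_def)
      have "\<forall>j<k. sample_mean Y N n i b \<omega> \<le> sample_mean Y N n j b \<omega>"
      proof (rule sample_mean_argmin_of_signs)
        show "Y i b l \<omega> \<le> 0" if "l < N n i b" for l
          using box[OF \<open>i < k\<close> that] by (simp add: A_def)
        show "0 \<le> Y j b l \<omega>" if "j < k" "j \<noteq> i" "l < N n j b" for j l
          using box[OF that(1,3)] that(2) by (simp add: A_def)
      qed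
      then show "\<omega> \<in> {\<omega> \<in> space M. \<forall>j<k. sample_mean Y N n i b \<omega> \<le> sample_mean Y N n j b \<omega>}"
        using \<open>\<omega> \<in> F\<close> by (simp add: F_def)
    qed
  qed
  finally show ?thesis .
qed

lemma (in prob_space) prob_sample_mean_argmin_le_exp:
  assumes indep: "indep_vars (\<lambda>_. borel) (\<lambda>(i, b, l). Y i b l) S"
    and S: "replications N n i b \<union> replications N n j b \<subseteq> S"
    and "j < k" "i \<noteq> j" and N: "0 < N n i b" "0 < N n j b"
    and lam: "0 < lam i b" "0 < lam j b" and "y j b \<le> y i b"
    and Yi: "\<And>l. distributed M lborel (Y i b l) (normal_density (y i b) (lam i b))"
    and Yj: "\<And>l. distributed M lborel (Y j b l) (normal_density (y j b) (lam j b))"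
  shows "prob {\<omega> \<in> space M. \<forall>j<k. sample_mean Y N n i b \<omega> \<le> sample_mean Y N n j b \<omega>}
    \<le> exp (- ((y i b - y j b)\<^sup>2 / (2 * ((lam i b)\<^sup>2 / N n i b + (lam j b)\<^sup>2 / N n j b))))"
proof -
  define D where "D = (\<lambda>\<omega>. sample_mean Y N n i b \<omega> - sample_mean Y N n j b \<omega>)"
  have "distributed M lborel
      (\<lambda>\<omega>. (\<Sum>x\<in>replications N n i b. (\<lambda>(i, b, l). Y i b l) x \<omega>) / card (replications N n i b)
        - (\<Sum>x\<in>replications N n j b. (\<lambda>(i, b, l). Y i b l) x \<omega>) / card (replications N n j b))
      (normal_density (y i b - y j b)
        (sqrt ((lam i b)\<^sup>2 / card (replications N n i b) + (lam j b)\<^sup>2 / card (replications N n j b))))"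
    using N lam Yi Yj \<open>i \<noteq> j\<close>
    by (intro distributed_mean_diff_indep_normal[OF indep S]) (auto simp: replications_def)
  then have "distributed M lborel D
      (normal_density (y i b - y j b) (sqrt ((lam i b)\<^sup>2 / N n i b + (lam j b)\<^sup>2 / N n j b)))"
    by (simp add: D_def sample_mean_eq_replications)
  then have "prob {\<omega> \<in> space M. D \<omega> \<le> 0}
      \<le> exp (- (y i b - y j b - 0)\<^sup>2 / (2 * (sqrt ((lam i b)\<^sup>2 / N n i b + (lam j b)\<^sup>2 / N n j b))\<^sup>2))"
    using N lam \<open>y j b \<le> y i b\<close> by (intro prob_normal_le_exp) (auto intro!: add_pos_pos)
  moreover have "prob {\<omega> \<in> space M. \<forall>j<k. sample_mean Y N n i b \<omega> \<le> sample_mean Y N n j b \<omega>}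
      \<le> prob {\<omega> \<in> space M. D \<omega> \<le> 0}"
  proof (rule finite_measure_mono)
    show "{\<omega> \<in> space M. \<forall>j<k. sample_mean Y N n i b \<omega> \<le> sample_mean Y N n j b \<omega>}
        \<subseteq> {\<omega> \<in> space M. D \<omega> \<le> 0}"
      using \<open>j < k\<close> by (auto simp: D_def)
    show "{\<omega> \<in> space M. D \<omega> \<le> 0} \<in> sets M"
      using distributed_measurable[OF \<open>distributed M lborel D _\<close>] by measurable
  qed
  ultimately show ?thesis
    by simp
qed

lemma liminf_decay_rate_ge:
  fixes p g :: "nat \<Rightarrow> real"
  assumes "g \<longlonglongrightarrow> G"
    and bound: "eventually (\<lambda>n. 0 < p n \<and> p n \<le> exp (- (real n * g n))) sequentially"
  shows "ereal G \<le> liminf (\<lambda>n. ereal (- (1 / real n) * ln (p n)))"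
proof -
  have "eventually (\<lambda>n. ereal (g n) \<le> ereal (- (1 / real n) * ln (p n))) sequentially"
    using bound eventually_gt_at_top[of 0]
  proof eventually_elim
    case (elim n)
    then have "real n * g n \<le> - ln (p n)"
      using ln_le_cancel_iff[of "p n" "exp (- (real n * g n))"] by simp
    then show ?case
      using elim by (simp add: field_simps)
  qed
  then have "liminf (\<lambda>n. ereal (g n)) \<le> liminf (\<lambda>n. ereal (- (1 / real n) * ln (p n)))"
    by (rule Liminf_mono)
  moreover have "liminf (\<lambda>n. ereal (g n)) = ereal G"
    using \<open>g \<longlonglongrightarrow> G\<close> by (intro lim_imp_Liminf) auto
  ultimately show ?thesis
    by simp
qed

lemma tendsto_G_rate:
  assumes "(\<lambda>n. a n i b) \<longlonglongrightarrow> alpha i b" and "(\<lambda>n. a n (ib b) b) \<longlonglongrightarrow> alpha (ib b) b"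
    and "0 < alpha i b" "0 < alpha (ib b) b" "0 < lam i b"
  shows "(\<lambda>n. G_rate y lam (a n) ib i b) \<longlonglongrightarrow> G_rate y lam alpha ib i b"
proof -
  let ?G = "\<lambda>\<alpha>\<^sub>1 \<alpha>\<^sub>2. (y i b - y (ib b) b)\<^sup>2 / (2 * ((lam i b)\<^sup>2 / \<alpha>\<^sub>1 + (lam (ib b) b)\<^sup>2 / \<alpha>\<^sub>2))"
  have "eventually (\<lambda>n. a n i b \<noteq> 0 \<and> a n (ib b) b \<noteq> 0) sequentially"
    using assms by (intro eventually_conj tendsto_imp_eventually_ne) auto
  then have "eventually (\<lambda>n. ?G (a n i b) (a n (ib b) b) = G_rate y lam (a n) ib i b) sequentially"
    by eventually_elim (simp add: G_rate_def)
  moreover have "0 < (lam i b)\<^sup>2 / alpha i b + (lam (ib b) b)\<^sup>2 / alpha (ib b) b"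
    using assms by (intro add_pos_nonneg) auto
  then have "(\<lambda>n. ?G (a n i b) (a n (ib b) b)) \<longlonglongrightarrow> ?G (alpha i b) (alpha (ib b) b)"
    using assms by (intro tendsto_intros) auto
  ultimately show ?thesis
    using assms by (simp add: tendsto_cong G_rate_def)
qed

lemma G_rate_empirical_allocation:
  fixes N :: "nat \<Rightarrow> nat \<Rightarrow> nat \<Rightarrow> nat"
  assumes "0 < n" "0 < N n i b" "0 < N n (ib b) b"
  shows "real n * G_rate y lam (\<lambda>i b. N n i b / real n) ib i b
    = (y i b - y (ib b) b)\<^sup>2 / (2 * ((lam i b)\<^sup>2 / N n i b + (lam (ib b) b)\<^sup>2 / N n (ib b) b))"
proof -
  have "(lam i b)\<^sup>2 / (N n i b / n) + (lam (ib b) b)\<^sup>2 / (N n (ib b) b / n)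
      = n * ((lam i b)\<^sup>2 / N n i b + (lam (ib b) b)\<^sup>2 / N n (ib b) b)"
    using assms by (simp add: field_simps)
  then show ?thesis
    using assms by (simp add: G_rate_def)
qed

theorem proposition1:
  fixes M :: "'a measure"
    and k B :: nat
    and y lam alpha :: "nat \<Rightarrow> nat \<Rightarrow> real"
    and ib :: "nat \<Rightarrow> nat"
    and Y :: "nat \<Rightarrow> nat \<Rightarrow> nat \<Rightarrow> 'a \<Rightarrow> real"
    and N :: "nat \<Rightarrow> nat \<Rightarrow> nat \<Rightarrow> nat"
    and b i :: nat
  assumes "prob_space M"
    and "k \<ge> 2"
    and lam_pos: "\<And>i b. i < k \<Longrightarrow> b < B \<Longrightarrow> lam i b > 0"
    and ib_range: "\<And>b. b < B \<Longrightarrow> ib b < k"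
    and ib_opt: "\<And>b j. b < B \<Longrightarrow> j < k \<Longrightarrow> j \<noteq> ib b \<Longrightarrow> y (ib b) b < y j b"
    and Y_normal: "\<And>i b j. i < k \<Longrightarrow> b < B \<Longrightarrow>
                     distributed M lborel (Y i b j) (normal_density (y i b) (lam i b))"
    and Y_indep: "prob_space.indep_vars M (\<lambda>_. borel) (\<lambda>(i, b, j). Y i b j)
                    {(i, b, j). i < k \<and> b < B}"
    and alpha_nonneg: "\<And>i b. i < k \<Longrightarrow> b < B \<Longrightarrow> alpha i b \<ge> 0"
    and alpha_sum: "(\<Sum>i<k. \<Sum>b<B. alpha i b) = 1"
    and N_budget: "\<And>n. (\<Sum>i<k. \<Sum>b<B. N n i b) = n"
    and N_frac: "\<And>i b. i < k \<Longrightarrow> b < B \<Longrightarrow>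
                   (\<lambda>n. real (N n i b) / real n) \<longlonglongrightarrow> alpha i b"
    and N_inf: "\<And>i b. i < k \<Longrightarrow> b < B \<Longrightarrow> filterlim (\<lambda>n. N n i b) at_top sequentially"
    and "b < B" and "i < k" and "i \<noteq> ib b"
  shows "liminf (\<lambda>n. ereal (- (1 / real n) *
            ln (measure M {\<omega> \<in> space M. \<forall>j<k. sample_mean Y N n i b \<omega> \<le> sample_mean Y N n j b \<omega>})))
         \<ge> ereal (G_rate y lam alpha ib i b)"
proof -
  interpret prob_space M by fact
  define E where "E n = {\<omega> \<in> space M. \<forall>j<k. sample_mean Y N n i b \<omega> \<le> sample_mean Y N n j b \<omega>}"
    for n
  have opt: "ib b < k" "i \<noteq> ib b" "y (ib b) b < y i b"
    using ib_range ib_opt \<open>b < B\<close> \<open>i < k\<close> \<open>i \<noteq> ib b\<close> by auto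
  have in_index_set: "replications N n j b \<subseteq> {(i, b, j). i < k \<and> b < B}" if "j < k" for n j
    using that \<open>b < B\<close> by (auto simp: replications_def)
  have E_pos: "0 < prob (E n)" for n
    unfolding E_def using in_index_set Y_normal lam_pos \<open>b < B\<close> \<open>i < k\<close>
    by (intro prob_sample_mean_argmin_pos[OF Y_indep]) auto
  show ?thesis
  proof (cases "alpha i b = 0 \<or> alpha (ib b) b = 0")
    case True
    have "ereal 0 \<le> liminf (\<lambda>n. ereal (- (1 / real n) * ln (prob (E n))))"
      using E_pos by (intro liminf_decay_rate_ge[where g = "\<lambda>_. 0"]) auto
    then show ?thesis
      using True by (simp add: G_rate_def E_def)
  next
    case False
    let ?g = "\<lambda>n. G_rate y lam (\<lambda>i b. N n i b / real n) ib i b"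
    have N_pos: "eventually (\<lambda>n. 0 < N n j b) sequentially" if "j < k" for j
      using N_inf[OF that \<open>b < B\<close>] eventually_gt_at_top[of 0] unfolding filterlim_iff by blast
    have "?g \<longlonglongrightarrow> G_rate y lam alpha ib i b"
      using False alpha_nonneg \<open>i < k\<close> opt(1) \<open>b < B\<close>
      by (intro tendsto_G_rate N_frac lam_pos) (auto simp: less_le)
    moreover have "eventually (\<lambda>n. 0 < prob (E n) \<and> prob (E n) \<le> exp (- (real n * ?g n))) sequentially"
      using N_pos[OF \<open>i < k\<close>] N_pos[OF opt(1)] eventually_gt_at_top[of 0]
    proof eventually_elim
      case (elim n)
      then have "prob (E n) \<le> exp (- (real n * ?g n))"
        unfolding E_def G_rate_empirical_allocation[of n N i b ib, OF elim(3,1,2)]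
        using in_index_set \<open>i < k\<close> opt Y_normal lam_pos \<open>b < B\<close>
        by (intro prob_sample_mean_argmin_le_exp[OF Y_indep]) auto
      then show ?case
        using E_pos by simp
    qed
    ultimately show ?thesis
      unfolding E_def by (rule liminf_decay_rate_ge)
  qed
qed

end
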